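(* Let $B>0$. Consider the directed exponential network model with interaction effect on nodes $\{1,\dots,n\}$: for each pair $i<j\le n$ the pair $Y_{ij}=(a_{ij},a_{ji})\in\{0,1\}^2$ (where $a_{ij}=1$ indicates an edge from $i$ to $j$) is drawn, independently over pairs, from $$ g(a_{ij},a_{ji};\alpha_i,\beta_i,\alpha_j,\beta_j,\rho)=\frac{\exp\{(\alpha_i+\beta_j)a_{ij}+(\beta_i+\alpha_j)a_{ji}+\rho\, a_{ij}a_{ji}\}}{Z(\alpha_i,\beta_i,\alpha_j,\beta_j,\rho)}, $$ with $Z$ the normalizing constant, at true parameters $\alpha^*_i,\beta^*_i,\rho^*$, all lying in $[-B,B]$, with the identification normalization $\alpha^*_1=0$. Let $(\hat{\boldsymbol\alpha},\hat{\boldsymbol\beta},\hat\rho)$ be the maximum likelihood estimator, normalized by $\hat\alpha_1=0$. Set $\Delta\alpha=\frac1n\sum_{i\le n}(\hat\alpha_i-\alpha^*_i)$ and $\Delta\beta=\frac1n\sum_{i\le n}(\hat\beta_i-\beta^*_i)$. Then, as $n\to\infty$: (i) $(\hat\rho-\rho^* )^2=O_p(n^{-1/2}(\log n)^2)$; (ii) $(\Delta\alpha+\Delta\beta)^2=O_p(n^{-1/2}(\log n)^2)$; (iii) $\|\hat{\boldsymbol\alpha}-\boldsymbol\alpha^*-\Delta\alpha\|_2^2+\|\hat{\boldsymbol\beta}-\boldsymbol\beta^*-\Delta\beta\|_2^2=O_p(n^{1/2}(\log n)^2)$, where $\mathbf v-x$ denotes subtracting the scalar $x$ from every coordinate of $\mathbf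 v$.
   Context: The parameters $(\boldsymbol\alpha,\boldsymbol\beta,\rho)$ and $(\boldsymbol\alpha-x,\boldsymbol\beta+x,\rho)$ define the same model for every real $x$, which is why the normalization $\alpha_1=0$ is imposed. The maximum likelihood estimator maximizes $\sum_{i<j}\log g(a_{ij},a_{ji};\alpha_i,\beta_i,\alpha_j,\beta_j,\rho)$ over parameters in the (compact) parameter space with all coordinates in $[-B,B]$ and $\alpha_1=0$. $O_p$ denotes stochastic boundedness as $n\to\infty$. *)

theory Defs
  imports Complex_Main
begin

type_synonym adj = "nat \<Rightarrow> nat \<Rightarrow> bool"
type_synonym params = "(nat \<Rightarrow> real) \<times> (nat \<Rightarrow> real) \<times> real"

definition dyad_num :: "real \<Rightarrow> real \<Rightarrow> real \<Rightarrow> real \<Rightarrow> real \<Rightarrow> bool \<Rightarrow> bool \<Rightarrow> real" where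
  "dyad_num ai bi aj bj rho x y =
     exp ((ai + bj) * of_bool x + (bi + aj) * of_bool y + rho * of_bool x * of_bool y)"

definition dyad_Z :: "real \<Rightarrow> real \<Rightarrow> real \<Rightarrow> real \<Rightarrow> real \<Rightarrow> real" where
  "dyad_Z ai bi aj bj rho = (\<Sum>x\<in>(UNIV::bool set). \<Sum>y\<in>(UNIV::bool set). dyad_num ai bi aj bj rho x y)"

definition dyad_g :: "bool \<Rightarrow> bool \<Rightarrow> real \<Rightarrow> real \<Rightarrow> real \<Rightarrow> real \<Rightarrow> real \<Rightarrow> real" where
  "dyad_g x y ai bi aj bj rho = dyad_num ai bi aj bj rho x y / dyad_Z ai bi aj bj rho"

definition configs :: "nat \<Rightarrow> adj set" where
  "configs n = {a. \<forall>i j. a i j \<longrightarrow> i \<in> {1..n} \<and> j \<in> {1..n} \<and> i \<noteq> j}"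

definition pairs :: "nat \<Rightarrow> (nat \<times> nat) set" where
  "pairs n = {(i, j). 1 \<le> i \<and> i < j \<and> j \<le> n}"

definition lik :: "nat \<Rightarrow> params \<Rightarrow> adj \<Rightarrow> real" where
  "lik n \<theta> a = (case \<theta> of (al, be, rho) \<Rightarrow>
     (\<Prod>(i, j)\<in>pairs n. dyad_g (a i j) (a j i) (al i) (be i) (al j) (be j) rho))"

definition loglik :: "nat \<Rightarrow> params \<Rightarrow> adj \<Rightarrow> real" where
  "loglik n \<theta> a = (case \<theta> of (al, be, rho) \<Rightarrow>
     (\<Sum>(i, j)\<in>pairs n. ln (dyad_g (a i j) (a j i) (al i) (be i) (al j) (be j) rho)))"

definition prob :: "nat \<Rightarrow> params \<Rightarrow> (adj \<Rightarrow> bool) \<Rightarrow> real" where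
  "prob n \<theta> E = (\<Sum>a\<in>{a\<in>configs n. E a}. lik n \<theta> a)"

definition param_space :: "real \<Rightarrow> nat \<Rightarrow> params set" where
  "param_space B n = {(al, be, rho). al 1 = 0 \<and> (\<forall>i\<in>{1..n}. \<bar>al i\<bar> \<le> B \<and> \<bar>be i\<bar> \<le> B) \<and> \<bar>rho\<bar> \<le> B}"

definition is_mle :: "real \<Rightarrow> nat \<Rightarrow> adj \<Rightarrow> params \<Rightarrow> bool" where
  "is_mle B n a \<theta> \<longleftrightarrow> \<theta> \<in> param_space B n \<and>
     (\<forall>\<theta>'\<in>param_space B n. loglik n \<theta>' a \<le> loglik n \<theta> a)"

definition bigOp :: "(nat \<Rightarrow> (adj \<Rightarrow> bool) \<Rightarrow> real) \<Rightarrow> (nat \<Rightarrow> adj \<Rightarrow> real) \<Rightarrow> (nat \<Rightarrow> real) \<Rightarrow> bool" where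
  "bigOp P X r \<longleftrightarrow> (\<forall>\<epsilon>>0. \<exists>M N. \<forall>n\<ge>N. P n (\<lambda>a. \<bar>X n a\<bar> > M * r n) < \<epsilon>)"

end

theory Submission
  imports Defs "HOL-Library.FuncSet"
begin

text \<open>
  Each dyad is a four-point exponential family in the natural parameters
  (\<alpha>_i + \<beta>_j, \<beta>_i + \<alpha>_j, \<rho>). On the parameter space every outcome has probability at least
  exp(-10 B) / 4, so the dyad log-likelihood is strongly concave with a modulus depending only on B.
  As the MLE does at least as well as the truth, summing over dyads bounds
  c \<Sigma>_{i<j} [(u_i + v_j)^2 + (v_i + u_j)^2 + (\<rho>' - \<rho>)^2], where u = \<alpha>' - \<alpha> and v = \<beta>' - \<beta>,
  by the pairing of these bounded errors with the centred out-degrees, in-degrees and number of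
  reciprocated dyads. Independence of the dyads gives this score vector expected squared norm at
  most 9 n^2, so by Markov's inequality and AM-GM the pairing is O_p(n^(3/2)). The term (\<rho>' - \<rho>)^2
  occurs n(n-1)/2 times, and \<Sigma>_{i,j} (u_i + v_j)^2 = n (|u - mean u|^2 + |v - mean v|^2) + n^2 (mean u + mean v)^2
  separates the other two error terms.
\<close>

section \<open>Independent dyads\<close>

definition dyad :: "adj \<Rightarrow> nat \<times> nat \<Rightarrow> bool \<times> bool" where
  "dyad a p = (a (fst p) (snd p), a (snd p) (fst p))"

definition graph_of_dyads :: "nat \<Rightarrow> (nat \<times> nat \<Rightarrow> bool \<times> bool) \<Rightarrow> adj" where
  "graph_of_dyads n y i j =
     (if (i, j) \<in> pairs n then fst (y (i, j)) else if (j, i) \<in> pairs n then snd (y (j, i)) else False)"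

definition dyad_law :: "params \<Rightarrow> nat \<times> nat \<Rightarrow> bool \<times> bool \<Rightarrow> real" where
  "dyad_law \<theta> p k = (case \<theta> of (al, be, rho) \<Rightarrow>
      dyad_g (fst k) (snd k) (al (fst p)) (be (fst p)) (al (snd p)) (be (snd p)) rho)"

definition dyad_mean :: "params \<Rightarrow> nat \<times> nat \<Rightarrow> (bool \<times> bool \<Rightarrow> real) \<Rightarrow> real" where
  "dyad_mean \<theta> p h = (\<Sum>k\<in>UNIV. dyad_law \<theta> p k * h k)"

definition expect :: "nat \<Rightarrow> params \<Rightarrow> (adj \<Rightarrow> real) \<Rightarrow> real" where
  "expect n \<theta> F = (\<Sum>a\<in>configs n. lik n \<theta> a * F a)"

lemma pairs_subset: "pairs n \<subseteq> {1..n} \<times> {1..n}"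
  unfolding pairs_def by auto

lemma finite_pairs: "finite (pairs n)"
  using pairs_subset by (rule finite_subset) auto

lemma card_pairs_le: "card (pairs n) \<le> n\<^sup>2"
  using card_mono[OF _ pairs_subset] by (simp add: card_cartesian_product power2_eq_square)

lemma mem_pairsD: "p \<in> pairs n \<Longrightarrow> fst p \<in> {1..n} \<and> snd p \<in> {1..n} \<and> fst p \<noteq> snd p"
  unfolding pairs_def by auto

lemma param_space_abs_le:
  assumes "(al, be, rho) \<in> param_space B n"
  shows "i \<in> {1..n} \<Longrightarrow> \<bar>al i\<bar> \<le> B \<and> \<bar>be i\<bar> \<le> B" and "\<bar>rho\<bar> \<le> B"
  using assms unfolding param_space_def by auto

lemma dyad_graph_of_dyads: "p \<in> pairs n \<Longrightarrow> dyad (graph_of_dyads n y) p = y p"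
  unfolding dyad_def graph_of_dyads_def pairs_def by (cases p) auto

lemma inj_on_graph_of_dyads: "inj_on (graph_of_dyads n) (PiE (pairs n) (\<lambda>_. UNIV))"
proof
  fix y y' assume y: "y \<in> PiE (pairs n) (\<lambda>_. UNIV)" and y': "y' \<in> PiE (pairs n) (\<lambda>_. UNIV)"
    and eq: "graph_of_dyads n y = graph_of_dyads n y'"
  show "y = y'"
  proof
    fix p
    show "y p = y' p"
    proof (cases "p \<in> pairs n")
      case True
      then show ?thesis using dyad_graph_of_dyads[OF True] eq by metis
    next
      case False
      then show ?thesis using y y' by (cases p) (simp add: PiE_def extensional_def)
    qed
  qed
qed

lemma configs_eq_image_graph_of_dyads: "configs n = graph_of_dyads n ` PiE (pairs n) (\<lambda>_. UNIV)"
proof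
  show "graph_of_dyads n ` PiE (pairs n) (\<lambda>_. UNIV) \<subseteq> configs n"
    unfolding configs_def graph_of_dyads_def pairs_def by auto
  show "configs n \<subseteq> graph_of_dyads n ` PiE (pairs n) (\<lambda>_. UNIV)"
  proof
    fix a assume a: "a \<in> configs n"
    have "graph_of_dyads n (restrict (dyad a) (pairs n)) = a"
    proof (intro ext)
      fix i j
      show "graph_of_dyads n (restrict (dyad a) (pairs n)) i j = a i j"
        using a unfolding graph_of_dyads_def dyad_def configs_def pairs_def
        by (cases "i < j"; cases "j < i") auto
    qed
    moreover have "restrict (dyad a) (pairs n) \<in> PiE (pairs n) (\<lambda>_. UNIV)"
      by auto
    ultimately show "a \<in> graph_of_dyads n ` PiE (pairs n) (\<lambda>_. UNIV)"
      by (metis image_eqI)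
  qed
qed

lemma finite_configs: "finite (configs n)"
  unfolding configs_eq_image_graph_of_dyads by (intro finite_imageI finite_PiE finite_pairs) auto

lemma lik_eq_prod_dyad_law: "lik n \<theta> a = (\<Prod>p\<in>pairs n. dyad_law \<theta> p (dyad a p))"
  unfolding lik_def dyad_law_def dyad_def by (cases \<theta>) (auto simp: case_prod_beta intro!: prod.cong)

lemma loglik_eq_sum_dyad_law: "loglik n \<theta> a = (\<Sum>p\<in>pairs n. ln (dyad_law \<theta> p (dyad a p)))"
  unfolding loglik_def dyad_law_def dyad_def by (cases \<theta>) (auto simp: case_prod_beta intro!: sum.cong)

lemma sum_UNIV_bool_pair:
  "(\<Sum>k\<in>(UNIV :: (bool \<times> bool) set). f k) = f (False, False) + f (False, True) + f (True, False) + f (True, True)"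
proof -
  have UNIV_eq: "(UNIV :: (bool \<times> bool) set) = {(False, False), (False, True), (True, False), (True, True)}"
    by auto
  show ?thesis unfolding UNIV_eq by (simp add: add.assoc)
qed

section \<open>Strong concavity of the dyad log-likelihood\<close>

lemma mult_ln_ratio_le:
  fixes P Q m :: real
  assumes m: "m > 0" and P: "m \<le> P" "P \<le> 1" and Q: "m \<le> Q" "Q \<le> 1"
  shows "P * (ln Q - ln P) \<le> (Q - P) - m\<^sup>2 / 4 * (ln Q - ln P)\<^sup>2"
proof -
  have Pp: "P > 0" and Qp: "Q > 0" using m P Q by auto
  have ln_lipschitz: "\<bar>ln Q - ln P\<bar> \<le> \<bar>Q - P\<bar> / m"
  proof -
    have ln_diff_le: "ln y - ln x \<le> (y - x) / m" if "m \<le> x" "x \<le> y" for x y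
    proof -
      have "ln y - ln x = ln (y / x)" using that m by (simp add: ln_div)
      also have "\<dots> \<le> y / x - 1" using that m by (intro ln_le_minus_one) auto
      also have "\<dots> = (y - x) / x" using that m by (simp add: field_simps)
      also have "\<dots> \<le> (y - x) / m" using that m by (intro divide_left_mono) auto
      finally show ?thesis .
    qed
    show ?thesis
    proof (cases "P \<le> Q")
      case True
      then have "ln P \<le> ln Q" using Pp by simp
      then show ?thesis using True ln_diff_le[of P Q] P by simp
    next
      case False
      then have "ln Q \<le> ln P" using Qp by simp
      then show ?thesis using False ln_diff_le[of Q P] Q by simp
    qed
  qed
  have sq_ln_le: "m\<^sup>2 * (ln Q - ln P)\<^sup>2 \<le> (Q - P)\<^sup>2"
  proof -
    have "m * \<bar>ln Q - ln P\<bar> \<le> \<bar>Q - P\<bar>" using ln_lipschitz m by (simp add: field_simps)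
    then have "(m * \<bar>ln Q - ln P\<bar>)\<^sup>2 \<le> \<bar>Q - P\<bar>\<^sup>2" by (intro power_mono) (use m in auto)
    then show ?thesis by (simp add: power_mult_distrib)
  qed
  define a where "a = sqrt P"
  define b where "b = sqrt Q"
  have a: "a > 0" "a \<le> 1" "a\<^sup>2 = P" using Pp P unfolding a_def by auto
  have b: "b > 0" "b \<le> 1" "b\<^sup>2 = Q" using Qp Q unfolding b_def by auto
  have hellinger: "(Q - P)\<^sup>2 \<le> 4 * (b - a)\<^sup>2"
  proof -
    have "(Q - P)\<^sup>2 = (b - a)\<^sup>2 * (b + a)\<^sup>2" using a b by (simp add: power2_eq_square algebra_simps)
    also have "\<dots> \<le> (b - a)\<^sup>2 * 2\<^sup>2" using a b by (intro mult_left_mono power_mono) auto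
    finally show ?thesis by simp
  qed
  have "ln Q - ln P = 2 * ln (b / a)"
    using a b ln_realpow[of a 2] ln_realpow[of b 2] by (simp add: ln_div)
  also have "\<dots> \<le> 2 * (b / a - 1)" using a b ln_le_minus_one[of "b / a"] by simp
  finally have "P * (ln Q - ln P) \<le> P * (2 * (b / a - 1))" using Pp by (intro mult_left_mono) auto
  also have "\<dots> = (Q - P) - (b - a)\<^sup>2" using a b by (simp add: power2_eq_square field_simps)
  also have "\<dots> \<le> (Q - P) - m\<^sup>2 / 4 * (ln Q - ln P)\<^sup>2" using sq_ln_le hellinger by (simp add: field_simps)
  finally show ?thesis .
qed

lemma sum_mult_ln_ratio_le:
  fixes P Q :: "'a \<Rightarrow> real"
  assumes "finite K" "sum P K = 1" "sum Q K = 1" "m > 0"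
    and "\<And>k. k \<in> K \<Longrightarrow> m \<le> P k \<and> P k \<le> 1 \<and> m \<le> Q k \<and> Q k \<le> 1"
  shows "(\<Sum>k\<in>K. P k * (ln (Q k) - ln (P k))) \<le> - (m\<^sup>2 / 4 * (\<Sum>k\<in>K. (ln (Q k) - ln (P k))\<^sup>2))"
proof -
  have "(\<Sum>k\<in>K. P k * (ln (Q k) - ln (P k)))
      \<le> (\<Sum>k\<in>K. (Q k - P k) - m\<^sup>2 / 4 * (ln (Q k) - ln (P k))\<^sup>2)"
    using assms by (intro sum_mono mult_ln_ratio_le) auto
  also have "\<dots> = - (m\<^sup>2 / 4 * (\<Sum>k\<in>K. (ln (Q k) - ln (P k))\<^sup>2))"
    using assms by (simp add: sum_subtractf sum_distrib_left)
  finally show ?thesis .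
qed

lemma sq_contrasts_le:
  fixes a b c d :: real
  shows "(a - b)\<^sup>2 + (c - b)\<^sup>2 + (d - a - c + b)\<^sup>2 \<le> 8 * (a\<^sup>2 + b\<^sup>2 + c\<^sup>2 + d\<^sup>2)"
proof -
  have two: "(x - y)\<^sup>2 \<le> 2 * (x\<^sup>2 + y\<^sup>2)" for x y :: real
    using zero_le_power2[of "x + y"] by (simp add: power2_eq_square algebra_simps)
  have "4 * (a\<^sup>2 + b\<^sup>2 + c\<^sup>2 + d\<^sup>2) - (d - a - c + b)\<^sup>2
      = (a + b)\<^sup>2 + (a - c)\<^sup>2 + (a + d)\<^sup>2 + (b + c)\<^sup>2 + (b - d)\<^sup>2 + (c + d)\<^sup>2"
    by (simp add: power2_eq_square algebra_simps)
  then have "(d - a - c + b)\<^sup>2 \<le> 4 * (a\<^sup>2 + b\<^sup>2 + c\<^sup>2 + d\<^sup>2)"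
    by (smt (verit) zero_le_power2)
  then show ?thesis
    using two[of a b] two[of c b] zero_le_power2[of a] zero_le_power2[of c] zero_le_power2[of d]
    by (smt (verit))
qed

definition dyad_stat :: "real \<Rightarrow> real \<Rightarrow> real \<Rightarrow> bool \<times> bool \<Rightarrow> real" where
  "dyad_stat e1 e2 e3 k = e1 * of_bool (fst k) + e2 * of_bool (snd k) + e3 * (of_bool (fst k) * of_bool (snd k))"

definition dyad_norm :: "real \<Rightarrow> real \<Rightarrow> real \<Rightarrow> real" where
  "dyad_norm e1 e2 e3 = (\<Sum>k\<in>UNIV. exp (dyad_stat e1 e2 e3 k))"

definition dyad_pmf :: "real \<Rightarrow> real \<Rightarrow> real \<Rightarrow> bool \<times> bool \<Rightarrow> real" where
  "dyad_pmf e1 e2 e3 k = exp (dyad_stat e1 e2 e3 k) / dyad_norm e1 e2 e3"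

definition dyad_pmf_lower :: "real \<Rightarrow> real" where
  "dyad_pmf_lower B = exp (- 10 * B) / 4"

text \<open>The factor 1/32 combines the 1/4 of \<open>sum_mult_ln_ratio_le\<close> with the 8 of \<open>sq_contrasts_le\<close>.\<close>

definition concavity_const :: "real \<Rightarrow> real" where
  "concavity_const B = (dyad_pmf_lower B)\<^sup>2 / 32"

lemma concavity_const_pos: "concavity_const B > 0"
  unfolding concavity_const_def dyad_pmf_lower_def by simp

lemma dyad_g_eq_dyad_pmf: "dyad_g x y ai bi aj bj rho = dyad_pmf (ai + bj) (bi + aj) rho (x, y)"
  unfolding dyad_g_def dyad_pmf_def dyad_num_def dyad_Z_def dyad_norm_def dyad_stat_def
    sum_UNIV_bool_pair UNIV_bool
  by (simp add: add.assoc)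

lemma dyad_norm_pos: "dyad_norm e1 e2 e3 > 0"
  unfolding dyad_norm_def by (intro sum_pos) auto

lemma dyad_pmf_pos: "dyad_pmf e1 e2 e3 k > 0"
  unfolding dyad_pmf_def using dyad_norm_pos by simp

lemma sum_dyad_pmf: "(\<Sum>k\<in>UNIV. dyad_pmf e1 e2 e3 k) = 1"
  unfolding dyad_pmf_def using dyad_norm_pos[of e1 e2 e3]
  by (simp add: sum_divide_distrib[symmetric] dyad_norm_def)

lemma ln_dyad_pmf: "ln (dyad_pmf e1 e2 e3 k) = dyad_stat e1 e2 e3 k - ln (dyad_norm e1 e2 e3)"
  unfolding dyad_pmf_def using dyad_norm_pos[of e1 e2 e3] by (simp add: ln_div)

lemma dyad_stat_diff:
  "dyad_stat f1 f2 f3 k - dyad_stat e1 e2 e3 k = dyad_stat (f1 - e1) (f2 - e2) (f3 - e3) k"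
  unfolding dyad_stat_def by (simp add: algebra_simps)

lemma dyad_pmf_bounds:
  assumes "\<bar>e1\<bar> \<le> 2 * B" "\<bar>e2\<bar> \<le> 2 * B" "\<bar>e3\<bar> \<le> B"
  shows "dyad_pmf_lower B \<le> dyad_pmf e1 e2 e3 k" "dyad_pmf e1 e2 e3 k \<le> 1"
proof -
  have stat_le: "\<bar>dyad_stat e1 e2 e3 \<kappa>\<bar> \<le> 5 * B" for \<kappa>
    using assms unfolding dyad_stat_def by (cases "fst \<kappa>"; cases "snd \<kappa>") auto
  have norm_le: "dyad_norm e1 e2 e3 \<le> 4 * exp (5 * B)"
  proof -
    have "dyad_norm e1 e2 e3 \<le> (\<Sum>\<kappa>\<in>(UNIV :: (bool \<times> bool) set). exp (5 * B))"
      unfolding dyad_norm_def using stat_le by (intro sum_mono) (simp add: abs_le_iff)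
    also have "\<dots> = 4 * exp (5 * B)" by (simp only: sum_UNIV_bool_pair)
    finally show ?thesis .
  qed
  have "dyad_pmf_lower B = exp (- 5 * B) / (4 * exp (5 * B))"
    unfolding dyad_pmf_lower_def by (simp add: exp_minus field_simps flip: exp_add)
  also have "\<dots> \<le> dyad_pmf e1 e2 e3 k"
    unfolding dyad_pmf_def using stat_le[of k] norm_le dyad_norm_pos
    by (intro frac_le) (auto simp: abs_le_iff)
  finally show "dyad_pmf_lower B \<le> dyad_pmf e1 e2 e3 k" .
  have "exp (dyad_stat e1 e2 e3 k) \<le> dyad_norm e1 e2 e3"
    unfolding dyad_norm_def by (rule member_le_sum) auto
  then show "dyad_pmf e1 e2 e3 k \<le> 1"
    unfolding dyad_pmf_def using dyad_norm_pos by simp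
qed

lemma ln_dyad_pmf_ratio_le:
  assumes e: "\<bar>e1\<bar> \<le> 2 * B" "\<bar>e2\<bar> \<le> 2 * B" "\<bar>e3\<bar> \<le> B"
    and f: "\<bar>f1\<bar> \<le> 2 * B" "\<bar>f2\<bar> \<le> 2 * B" "\<bar>f3\<bar> \<le> B"
  shows "ln (dyad_pmf f1 f2 f3 k) - ln (dyad_pmf e1 e2 e3 k)
    \<le> dyad_stat (f1 - e1) (f2 - e2) (f3 - e3) k
      - (\<Sum>\<kappa>\<in>UNIV. dyad_pmf e1 e2 e3 \<kappa> * dyad_stat (f1 - e1) (f2 - e2) (f3 - e3) \<kappa>)
      - concavity_const B * ((f1 - e1)\<^sup>2 + (f2 - e2)\<^sup>2 + (f3 - e3)\<^sup>2)"
proof -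
  define m where "m = dyad_pmf_lower B"
  define P where "P = dyad_pmf e1 e2 e3"
  define S where "S = dyad_stat (f1 - e1) (f2 - e2) (f3 - e3)"
  define D where "D = (\<lambda>\<kappa>. ln (dyad_pmf f1 f2 f3 \<kappa>) - ln (P \<kappa>))"
  define c0 where "c0 = ln (dyad_norm e1 e2 e3) - ln (dyad_norm f1 f2 f3)"
  have D_eq: "D \<kappa> = S \<kappa> + c0" for \<kappa>
    unfolding D_def P_def S_def c0_def ln_dyad_pmf dyad_stat_diff[symmetric] by simp
  have kl: "(\<Sum>\<kappa>\<in>UNIV. P \<kappa> * D \<kappa>) \<le> - (m\<^sup>2 / 4 * (\<Sum>\<kappa>\<in>UNIV. (D \<kappa>)\<^sup>2))"
    unfolding D_def P_def m_def
    by (intro sum_mult_ln_ratio_le) (use dyad_pmf_bounds[OF e] dyad_pmf_bounds[OF f] in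
        \<open>auto simp: sum_dyad_pmf dyad_pmf_lower_def\<close>)
  have mean: "(\<Sum>\<kappa>\<in>UNIV. P \<kappa> * D \<kappa>) = (\<Sum>\<kappa>\<in>UNIV. P \<kappa> * S \<kappa>) + c0"
    unfolding D_eq P_def by (simp add: distrib_left sum.distrib sum_distrib_right[symmetric] sum_dyad_pmf)
  \<comment> \<open>The natural parameters are contrasts of the log-ratio \<open>D\<close> over the four dyad outcomes.\<close>
  have contrasts: "(f1 - e1)\<^sup>2 + (f2 - e2)\<^sup>2 + (f3 - e3)\<^sup>2 \<le> 8 * (\<Sum>\<kappa>\<in>UNIV. (D \<kappa>)\<^sup>2)"
    using sq_contrasts_le[of "D (True, False)" "D (False, False)" "D (False, True)" "D (True, True)"]
    unfolding sum_UNIV_bool_pair D_eq S_def dyad_stat_def by (simp add: algebra_simps)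
  have "D k = S k - (\<Sum>\<kappa>\<in>UNIV. P \<kappa> * S \<kappa>) + (\<Sum>\<kappa>\<in>UNIV. P \<kappa> * D \<kappa>)"
    using D_eq mean by simp
  also have "\<dots> \<le> S k - (\<Sum>\<kappa>\<in>UNIV. P \<kappa> * S \<kappa>) - m\<^sup>2 / 32 * ((f1 - e1)\<^sup>2 + (f2 - e2)\<^sup>2 + (f3 - e3)\<^sup>2)"
    using kl mult_left_mono[OF contrasts, of "m\<^sup>2 / 32"] by simp
  finally show ?thesis unfolding D_def P_def S_def m_def concavity_const_def by simp
qed

section \<open>Expectations under the model\<close>

lemma dyad_law_eq_dyad_pmf:
  "dyad_law (al, be, rho) p k = dyad_pmf (al (fst p) + be (snd p)) (be (fst p) + al (snd p)) rho k"
  unfolding dyad_law_def by (cases k) (simp add: dyad_g_eq_dyad_pmf)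

lemma dyad_law_pos: "dyad_law \<theta> p k > 0"
  by (cases \<theta>) (simp add: dyad_law_eq_dyad_pmf dyad_pmf_pos)

lemma sum_dyad_law: "(\<Sum>k\<in>UNIV. dyad_law \<theta> p k) = 1"
  by (cases \<theta>) (simp add: dyad_law_eq_dyad_pmf sum_dyad_pmf)

lemma lik_nonneg: "lik n \<theta> a \<ge> 0"
  unfolding lik_eq_prod_dyad_law by (intro prod_nonneg) (simp add: less_imp_le dyad_law_pos)

lemma dyad_mean_const [simp]: "dyad_mean \<theta> p (\<lambda>_. c) = c"
  unfolding dyad_mean_def by (simp add: sum_distrib_right[symmetric] sum_dyad_law)

lemma dyad_mean_add: "dyad_mean \<theta> p (\<lambda>\<kappa>. f \<kappa> + g \<kappa>) = dyad_mean \<theta> p f + dyad_mean \<theta> p g"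
  unfolding dyad_mean_def by (simp add: distrib_left sum.distrib)

lemma dyad_mean_cmult: "dyad_mean \<theta> p (\<lambda>\<kappa>. c * f \<kappa>) = c * dyad_mean \<theta> p f"
  unfolding dyad_mean_def by (simp add: sum_distrib_left algebra_simps)

lemma dyad_mean_sum: "dyad_mean \<theta> p (\<lambda>\<kappa>. \<Sum>i\<in>I. f i \<kappa>) = (\<Sum>i\<in>I. dyad_mean \<theta> p (f i))"
  unfolding dyad_mean_def by (simp add: sum_distrib_left sum.swap[of _ I])

lemma dyad_mean_mono: "(\<And>\<kappa>. f \<kappa> \<le> g \<kappa>) \<Longrightarrow> dyad_mean \<theta> p f \<le> dyad_mean \<theta> p g"
  unfolding dyad_mean_def by (intro sum_mono mult_left_mono) (auto intro: less_imp_le dyad_law_pos)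

lemma dyad_mean_bounds:
  assumes "\<And>\<kappa>. 0 \<le> f \<kappa>" "\<And>\<kappa>. f \<kappa> \<le> 1"
  shows "0 \<le> dyad_mean \<theta> p f" "dyad_mean \<theta> p f \<le> 1"
  using dyad_mean_mono[of "\<lambda>_. 0" f \<theta> p] dyad_mean_mono[of f "\<lambda>_. 1" \<theta> p] assms by simp_all

definition dyad_dev :: "params \<Rightarrow> nat \<times> nat \<Rightarrow> (bool \<times> bool \<Rightarrow> real) \<Rightarrow> bool \<times> bool \<Rightarrow> real" where
  "dyad_dev \<theta> p h \<kappa> = h \<kappa> - dyad_mean \<theta> p h"

lemma dyad_mean_dyad_dev: "dyad_mean \<theta> p (dyad_dev \<theta> p h) = 0"
  unfolding dyad_dev_def dyad_mean_def
  by (simp add: right_diff_distrib sum_subtractf sum_distrib_right[symmetric] sum_dyad_law)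

lemma expect_prod_all_dyads:
  "expect n \<theta> (\<lambda>a. \<Prod>p\<in>pairs n. f p (dyad a p)) = (\<Prod>p\<in>pairs n. dyad_mean \<theta> p (f p))"
proof -
  let ?Y = "PiE (pairs n) (\<lambda>_. UNIV)"
  have "expect n \<theta> (\<lambda>a. \<Prod>p\<in>pairs n. f p (dyad a p))
      = (\<Sum>y\<in>?Y. lik n \<theta> (graph_of_dyads n y) * (\<Prod>p\<in>pairs n. f p (dyad (graph_of_dyads n y) p)))"
    unfolding expect_def configs_eq_image_graph_of_dyads by (simp add: sum.reindex[OF inj_on_graph_of_dyads])
  also have "\<dots> = (\<Sum>y\<in>?Y. \<Prod>p\<in>pairs n. dyad_law \<theta> p (y p) * f p (y p))"
    by (intro sum.cong refl)
      (simp add: lik_eq_prod_dyad_law dyad_graph_of_dyads prod.distrib cong: prod.cong)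
  also have "\<dots> = (\<Prod>p\<in>pairs n. dyad_mean \<theta> p (f p))"
    unfolding dyad_mean_def by (rule prod_sum_PiE[symmetric]) (auto simp: finite_pairs)
  finally show ?thesis .
qed

lemma expect_prod_dyads:
  assumes "S \<subseteq> pairs n"
  shows "expect n \<theta> (\<lambda>a. \<Prod>p\<in>S. h p (dyad a p)) = (\<Prod>p\<in>S. dyad_mean \<theta> p (h p))"
proof -
  define f where "f p = (if p \<in> S then h p else (\<lambda>_. 1))" for p
  have extend: "(\<Prod>p\<in>S. g p) = (\<Prod>p\<in>pairs n. g p)" if "\<And>p. p \<notin> S \<Longrightarrow> g p = 1" for g :: "_ \<Rightarrow> real"
    using that assms by (intro prod.mono_neutral_left finite_pairs) auto
  have "expect n \<theta> (\<lambda>a. \<Prod>p\<in>S. h p (dyad a p)) = expect n \<theta> (\<lambda>a. \<Prod>p\<in>pairs n. f p (dyad a p))"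
    unfolding f_def using extend[of "\<lambda>p. (if p \<in> S then h p else (\<lambda>_. 1)) (dyad _ p)"]
    by (simp add: f_def cong: prod.cong)
  also have "\<dots> = (\<Prod>p\<in>pairs n. dyad_mean \<theta> p (f p))" by (rule expect_prod_all_dyads)
  also have "\<dots> = (\<Prod>p\<in>S. dyad_mean \<theta> p (h p))"
    using extend[of "\<lambda>p. dyad_mean \<theta> p (f p)"] by (simp add: f_def cong: prod.cong)
  finally show ?thesis .
qed

lemma expect_dyad: "p \<in> pairs n \<Longrightarrow> expect n \<theta> (\<lambda>a. h (dyad a p)) = dyad_mean \<theta> p h"
  using expect_prod_dyads[of "{p}" n \<theta> "\<lambda>_. h"] by simp

lemma expect_mult_dyads:
  assumes "p \<in> pairs n" "q \<in> pairs n" "p \<noteq> q"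
  shows "expect n \<theta> (\<lambda>a. h1 (dyad a p) * h2 (dyad a q)) = dyad_mean \<theta> p h1 * dyad_mean \<theta> q h2"
  using expect_prod_dyads[of "{p, q}" n \<theta> "\<lambda>r. if r = p then h1 else h2"] assms by simp

lemma expect_sum: "finite I \<Longrightarrow> expect n \<theta> (\<lambda>a. \<Sum>i\<in>I. F i a) = (\<Sum>i\<in>I. expect n \<theta> (F i))"
  unfolding expect_def by (simp add: sum_distrib_left sum.swap[of _ I])

lemma expect_add: "expect n \<theta> (\<lambda>a. F a + G a) = expect n \<theta> F + expect n \<theta> G"
  unfolding expect_def by (simp add: distrib_left sum.distrib)

lemma expect_sq_sum_centered:
  assumes centered: "\<And>p. p \<in> pairs n \<Longrightarrow> dyad_mean \<theta> p (h p) = 0"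
  shows "expect n \<theta> (\<lambda>a. (\<Sum>p\<in>pairs n. h p (dyad a p))\<^sup>2) = (\<Sum>p\<in>pairs n. dyad_mean \<theta> p (\<lambda>\<kappa>. (h p \<kappa>)\<^sup>2))"
proof -
  have cross: "expect n \<theta> (\<lambda>a. h p (dyad a p) * h q (dyad a q))
      = (if q = p then dyad_mean \<theta> p (\<lambda>\<kappa>. (h p \<kappa>)\<^sup>2) else 0)"
    if "p \<in> pairs n" "q \<in> pairs n" for p q
    using that expect_dyad[of p n \<theta> "\<lambda>\<kappa>. (h p \<kappa>)\<^sup>2"] expect_mult_dyads[of p n q \<theta> "h p" "h q"] centered
    by (auto simp: power2_eq_square)
  have "expect n \<theta> (\<lambda>a. (\<Sum>p\<in>pairs n. h p (dyad a p))\<^sup>2)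
      = (\<Sum>p\<in>pairs n. \<Sum>q\<in>pairs n. expect n \<theta> (\<lambda>a. h p (dyad a p) * h q (dyad a q)))"
    by (simp add: power2_eq_square sum_product expect_sum finite_pairs)
  also have "\<dots> = (\<Sum>p\<in>pairs n. dyad_mean \<theta> p (\<lambda>\<kappa>. (h p \<kappa>)\<^sup>2))"
    by (simp add: cross finite_pairs cong: sum.cong)
  finally show ?thesis .
qed

lemma prob_mono:
  assumes "\<And>a. a \<in> configs n \<Longrightarrow> E a \<Longrightarrow> E' a"
  shows "prob n \<theta> E \<le> prob n \<theta> E'"
  unfolding prob_def using assms by (intro sum_mono2) (auto simp: finite_configs lik_nonneg)

lemma prob_gt_le_expect:
  assumes t: "t > 0" and nonneg: "\<And>a. a \<in> configs n \<Longrightarrow> F a \<ge> 0"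
  shows "prob n \<theta> (\<lambda>a. t < F a) \<le> expect n \<theta> F / t"
proof -
  have "prob n \<theta> (\<lambda>a. t < F a) \<le> (\<Sum>a\<in>{a\<in>configs n. t < F a}. lik n \<theta> a * F a / t)"
    unfolding prob_def using t
    by (intro sum_mono) (auto simp: field_simps intro: mult_right_mono lik_nonneg)
  also have "\<dots> \<le> (\<Sum>a\<in>configs n. lik n \<theta> a * F a / t)"
    using t nonneg by (intro sum_mono2 finite_configs) (auto simp: lik_nonneg)
  also have "\<dots> = expect n \<theta> F / t" unfolding expect_def by (simp add: sum_divide_distrib)
  finally show ?thesis .
qed

section \<open>Score statistics\<close>

text \<open>Dyad \<open>p = (i, j)\<close> contributes \<open>a\<^sub>i\<^sub>j\<close> to the out-degree of \<open>i\<close> and \<open>a\<^sub>j\<^sub>i\<close> to that of \<open>j\<close>,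
  and symmetrically to in-degrees.\<close>

definition out_dev :: "params \<Rightarrow> nat \<Rightarrow> nat \<times> nat \<Rightarrow> bool \<times> bool \<Rightarrow> real" where
  "out_dev \<theta> k p \<kappa> =
     (if fst p = k then dyad_dev \<theta> p (\<lambda>\<kappa>. of_bool (fst \<kappa>)) \<kappa> else 0)
   + (if snd p = k then dyad_dev \<theta> p (\<lambda>\<kappa>. of_bool (snd \<kappa>)) \<kappa> else 0)"

definition in_dev :: "params \<Rightarrow> nat \<Rightarrow> nat \<times> nat \<Rightarrow> bool \<times> bool \<Rightarrow> real" where
  "in_dev \<theta> k p \<kappa> =
     (if snd p = k then dyad_dev \<theta> p (\<lambda>\<kappa>. of_bool (fst \<kappa>)) \<kappa> else 0)
   + (if fst p = k then dyad_dev \<theta> p (\<lambda>\<kappa>. of_bool (snd \<kappa>)) \<kappa> else 0)"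

definition recip_dev :: "params \<Rightarrow> nat \<times> nat \<Rightarrow> bool \<times> bool \<Rightarrow> real" where
  "recip_dev \<theta> p = dyad_dev \<theta> p (\<lambda>\<kappa>. of_bool (fst \<kappa>) * of_bool (snd \<kappa>))"

definition out_degree_dev :: "nat \<Rightarrow> params \<Rightarrow> nat \<Rightarrow> adj \<Rightarrow> real" where
  "out_degree_dev n \<theta> k a = (\<Sum>p\<in>pairs n. out_dev \<theta> k p (dyad a p))"

definition in_degree_dev :: "nat \<Rightarrow> params \<Rightarrow> nat \<Rightarrow> adj \<Rightarrow> real" where
  "in_degree_dev n \<theta> k a = (\<Sum>p\<in>pairs n. in_dev \<theta> k p (dyad a p))"

definition reciprocity_dev :: "nat \<Rightarrow> params \<Rightarrow> adj \<Rightarrow> real" where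
  "reciprocity_dev n \<theta> a = (\<Sum>p\<in>pairs n. recip_dev \<theta> p (dyad a p))"

definition score_sq :: "nat \<Rightarrow> params \<Rightarrow> adj \<Rightarrow> real" where
  "score_sq n \<theta> a =
     (\<Sum>k=1..n. (out_degree_dev n \<theta> k a)\<^sup>2 + (in_degree_dev n \<theta> k a)\<^sup>2) + (reciprocity_dev n \<theta> a)\<^sup>2"

lemma score_sq_nonneg: "score_sq n \<theta> a \<ge> 0"
  unfolding score_sq_def by (intro add_nonneg_nonneg sum_nonneg) auto

lemma dyad_mean_if: "dyad_mean \<theta> p (\<lambda>\<kappa>. if c then f \<kappa> else 0) = (if c then dyad_mean \<theta> p f else 0)"
  by (cases c) simp_all

lemma dyad_mean_out_dev: "dyad_mean \<theta> p (out_dev \<theta> k p) = 0"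
  unfolding out_dev_def by (simp add: dyad_mean_add dyad_mean_if dyad_mean_dyad_dev)

lemma dyad_mean_in_dev: "dyad_mean \<theta> p (in_dev \<theta> k p) = 0"
  unfolding in_dev_def by (simp add: dyad_mean_add dyad_mean_if dyad_mean_dyad_dev)

lemma dyad_mean_recip_dev: "dyad_mean \<theta> p (recip_dev \<theta> p) = 0"
  unfolding recip_dev_def by (rule dyad_mean_dyad_dev)

lemma sq_dyad_dev_le_one:
  assumes "\<And>\<kappa>. 0 \<le> h \<kappa>" "\<And>\<kappa>. h \<kappa> \<le> 1"
  shows "(dyad_dev \<theta> p h \<kappa>)\<^sup>2 \<le> 1"
proof -
  have "0 \<le> dyad_mean \<theta> p h" "dyad_mean \<theta> p h \<le> 1"
    using assms by (rule dyad_mean_bounds)+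
  then have "\<bar>dyad_dev \<theta> p h \<kappa>\<bar> \<le> 1"
    unfolding dyad_dev_def using assms[of \<kappa>] by (simp add: abs_le_iff)
  then show ?thesis by (simp add: abs_square_le_1)
qed

lemma sum_sq_two_indicators_le:
  fixes A C :: real and i j n :: nat
  assumes "A\<^sup>2 \<le> 1" "C\<^sup>2 \<le> 1"
  shows "(\<Sum>k\<in>{1..n}. ((if i = k then A else 0) + (if j = k then C else 0))\<^sup>2) \<le> 4"
proof -
  have "(\<Sum>k\<in>{1..n}. ((if i = k then A else 0) + (if j = k then C else 0))\<^sup>2)
      \<le> (\<Sum>k\<in>{1..n}. (if i = k then 2 * A\<^sup>2 else 0) + (if j = k then 2 * C\<^sup>2 else 0))"
  proof (intro sum_mono)
    fix k
    have "(x + y)\<^sup>2 \<le> 2 * x\<^sup>2 + 2 * y\<^sup>2" for x y :: real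
      using zero_le_power2[of "x - y"] by (simp add: power2_eq_square algebra_simps)
    then show "((if i = k then A else 0) + (if j = k then C else 0))\<^sup>2
        \<le> (if i = k then 2 * A\<^sup>2 else 0) + (if j = k then 2 * C\<^sup>2 else 0)"
      by auto
  qed
  also have "\<dots> = (if i \<in> {1..n} then 2 * A\<^sup>2 else 0) + (if j \<in> {1..n} then 2 * C\<^sup>2 else 0)"
    by (simp add: sum.distrib)
  also have "\<dots> \<le> 2 * A\<^sup>2 + 2 * C\<^sup>2"
    by auto
  also have "\<dots> \<le> 4" using assms by simp
  finally show ?thesis .
qed

lemma sum_sq_out_dev_le: "(\<Sum>k\<in>{1..n}. (out_dev \<theta> k p \<kappa>)\<^sup>2) \<le> 4"
  unfolding out_dev_def by (intro sum_sq_two_indicators_le sq_dyad_dev_le_one) auto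

lemma sum_sq_in_dev_le: "(\<Sum>k\<in>{1..n}. (in_dev \<theta> k p \<kappa>)\<^sup>2) \<le> 4"
  unfolding in_dev_def by (intro sum_sq_two_indicators_le sq_dyad_dev_le_one) auto

lemma sq_recip_dev_le: "(recip_dev \<theta> p \<kappa>)\<^sup>2 \<le> 1"
  unfolding recip_dev_def by (intro sq_dyad_dev_le_one) auto

lemma expect_score_sq_le: "expect n \<theta> (score_sq n \<theta>) \<le> 9 * (real n)\<^sup>2"
proof -
  define V where "V p \<kappa> = (\<Sum>k=1..n. (out_dev \<theta> k p \<kappa>)\<^sup>2 + (in_dev \<theta> k p \<kappa>)\<^sup>2) + (recip_dev \<theta> p \<kappa>)\<^sup>2" for p \<kappa>
  have "expect n \<theta> (score_sq n \<theta>)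
      = (\<Sum>k=1..n. \<Sum>p\<in>pairs n. dyad_mean \<theta> p (\<lambda>\<kappa>. (out_dev \<theta> k p \<kappa>)\<^sup>2) + dyad_mean \<theta> p (\<lambda>\<kappa>. (in_dev \<theta> k p \<kappa>)\<^sup>2))
        + (\<Sum>p\<in>pairs n. dyad_mean \<theta> p (\<lambda>\<kappa>. (recip_dev \<theta> p \<kappa>)\<^sup>2))"
    unfolding score_sq_def out_degree_dev_def in_degree_dev_def reciprocity_dev_def
    by (simp add: expect_add expect_sum expect_sq_sum_centered dyad_mean_out_dev dyad_mean_in_dev
        dyad_mean_recip_dev sum.distrib)
  also have "\<dots> = (\<Sum>p\<in>pairs n. dyad_mean \<theta> p (V p))"
    unfolding V_def by (simp add: dyad_mean_add dyad_mean_sum sum.distrib sum.swap[of _ "{Suc 0..n}"])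
  also have "\<dots> \<le> (\<Sum>p\<in>pairs n. dyad_mean \<theta> p (\<lambda>_. 9))"
  proof (intro sum_mono dyad_mean_mono)
    fix p \<kappa>
    show "V p \<kappa> \<le> 9"
      unfolding V_def using sum_sq_out_dev_le[where n = n and \<theta> = \<theta> and p = p and \<kappa> = \<kappa>]
        sum_sq_in_dev_le[where n = n and \<theta> = \<theta> and p = p and \<kappa> = \<kappa>] sq_recip_dev_le[of \<theta> p \<kappa>]
      unfolding sum.distrib by linarith
  qed
  also have "\<dots> \<le> 9 * (real n)\<^sup>2"
    using card_pairs_le[of n] by (simp flip: of_nat_le_iff)
  finally show ?thesis .
qed

section \<open>The quadratic bound implied by maximality\<close>

lemma dyad_stat_sub_mean:
  "dyad_stat d1 d2 d3 \<kappa> - dyad_mean \<theta> p (dyad_stat d1 d2 d3)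
     = d1 * dyad_dev \<theta> p (\<lambda>\<kappa>. of_bool (fst \<kappa>)) \<kappa> + d2 * dyad_dev \<theta> p (\<lambda>\<kappa>. of_bool (snd \<kappa>)) \<kappa>
       + d3 * recip_dev \<theta> p \<kappa>"
proof -
  have "dyad_mean \<theta> p (dyad_stat d1 d2 d3) = d1 * dyad_mean \<theta> p (\<lambda>\<kappa>. of_bool (fst \<kappa>))
      + d2 * dyad_mean \<theta> p (\<lambda>\<kappa>. of_bool (snd \<kappa>)) + d3 * dyad_mean \<theta> p (\<lambda>\<kappa>. of_bool (fst \<kappa>) * of_bool (snd \<kappa>))"
    unfolding dyad_stat_def by (simp only: dyad_mean_add dyad_mean_cmult)
  then show ?thesis unfolding dyad_dev_def recip_dev_def dyad_stat_def by (simp add: algebra_simps)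
qed

lemma sum_mult_two_indicators:
  fixes u :: "'a \<Rightarrow> real"
  assumes "finite S" "i \<in> S" "j \<in> S"
  shows "(\<Sum>k\<in>S. u k * ((if i = k then A else 0) + (if j = k then C else 0))) = u i * A + u j * C"
proof -
  have "(\<Sum>k\<in>S. u k * ((if i = k then A else 0) + (if j = k then C else 0)))
      = (\<Sum>k\<in>S. (if i = k then u k * A else 0) + (if j = k then u k * C else 0))"
    by (intro sum.cong) (auto simp: distrib_left)
  then show ?thesis using assms by (simp add: sum.distrib)
qed

lemma sum_weighted_degree_devs:
  "(\<Sum>k=1..n. u k * out_degree_dev n \<theta> k a + v k * in_degree_dev n \<theta> k a)
     = (\<Sum>p\<in>pairs n. (u (fst p) + v (snd p)) * dyad_dev \<theta> p (\<lambda>\<kappa>. of_bool (fst \<kappa>)) (dyad a p)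
                   + (v (fst p) + u (snd p)) * dyad_dev \<theta> p (\<lambda>\<kappa>. of_bool (snd \<kappa>)) (dyad a p))"
proof -
  have "(\<Sum>k=1..n. u k * out_degree_dev n \<theta> k a + v k * in_degree_dev n \<theta> k a)
      = (\<Sum>p\<in>pairs n. \<Sum>k=1..n. u k * out_dev \<theta> k p (dyad a p) + v k * in_dev \<theta> k p (dyad a p))"
    unfolding out_degree_dev_def in_degree_dev_def
    by (simp add: sum_distrib_left sum.distrib sum.swap[of _ "{Suc 0..n}"])
  also have "\<dots> = (\<Sum>p\<in>pairs n. (u (fst p) + v (snd p)) * dyad_dev \<theta> p (\<lambda>\<kappa>. of_bool (fst \<kappa>)) (dyad a p)
                   + (v (fst p) + u (snd p)) * dyad_dev \<theta> p (\<lambda>\<kappa>. of_bool (snd \<kappa>)) (dyad a p))"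
  proof (intro sum.cong refl)
    fix p assume "p \<in> pairs n"
    then have "fst p \<in> {1..n}" "snd p \<in> {1..n}" by (auto dest: mem_pairsD)
    then show "(\<Sum>k=1..n. u k * out_dev \<theta> k p (dyad a p) + v k * in_dev \<theta> k p (dyad a p))
      = (u (fst p) + v (snd p)) * dyad_dev \<theta> p (\<lambda>\<kappa>. of_bool (fst \<kappa>)) (dyad a p)
        + (v (fst p) + u (snd p)) * dyad_dev \<theta> p (\<lambda>\<kappa>. of_bool (snd \<kappa>)) (dyad a p)"
      unfolding out_dev_def in_dev_def sum.distrib
      by (simp only: sum_mult_two_indicators finite_atLeastAtMost) (simp add: algebra_simps)
  qed
  finally show ?thesis .
qed

lemma ln_dyad_law_ratio_le:
  assumes par_true: "(als, bes, rs) \<in> param_space B n" and par: "(al, be, r) \<in> param_space B n"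
    and p: "p \<in> pairs n"
  defines "d1 \<equiv> al (fst p) - als (fst p) + (be (snd p) - bes (snd p))"
    and "d2 \<equiv> be (fst p) - bes (fst p) + (al (snd p) - als (snd p))"
  shows "ln (dyad_law (al, be, r) p \<kappa>) - ln (dyad_law (als, bes, rs) p \<kappa>)
    \<le> d1 * dyad_dev (als, bes, rs) p (\<lambda>\<kappa>. of_bool (fst \<kappa>)) \<kappa>
      + d2 * dyad_dev (als, bes, rs) p (\<lambda>\<kappa>. of_bool (snd \<kappa>)) \<kappa>
      + (r - rs) * recip_dev (als, bes, rs) p \<kappa> - concavity_const B * (d1\<^sup>2 + d2\<^sup>2 + (r - rs)\<^sup>2)"
proof -
  have ij: "fst p \<in> {1..n}" "snd p \<in> {1..n}" using mem_pairsD[OF p] by auto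
  note bounds = param_space_abs_le(1)[OF par_true ij(1)] param_space_abs_le(1)[OF par_true ij(2)]
    param_space_abs_le(1)[OF par ij(1)] param_space_abs_le(1)[OF par ij(2)]
    param_space_abs_le(2)[OF par_true] param_space_abs_le(2)[OF par]
  have "\<bar>als (fst p) + bes (snd p)\<bar> \<le> 2 * B" "\<bar>bes (fst p) + als (snd p)\<bar> \<le> 2 * B" "\<bar>rs\<bar> \<le> B"
    "\<bar>al (fst p) + be (snd p)\<bar> \<le> 2 * B" "\<bar>be (fst p) + al (snd p)\<bar> \<le> 2 * B" "\<bar>r\<bar> \<le> B"
    using bounds by (simp_all add: abs_le_iff)
  note concave = ln_dyad_pmf_ratio_le[OF this, of \<kappa>]
  have "dyad_mean (als, bes, rs) p (dyad_stat d1 d2 (r - rs))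
      = (\<Sum>\<kappa>\<in>UNIV. dyad_pmf (als (fst p) + bes (snd p)) (bes (fst p) + als (snd p)) rs \<kappa> * dyad_stat d1 d2 (r - rs) \<kappa>)"
    unfolding dyad_mean_def dyad_law_eq_dyad_pmf ..
  then show ?thesis
    using concave dyad_stat_sub_mean[of d1 d2 "r - rs" \<kappa> "(als, bes, rs)" p]
    unfolding dyad_law_eq_dyad_pmf d1_def d2_def by (simp add: algebra_simps)
qed

lemma loglik_gain_le_score:
  assumes par_true: "(als, bes, rs) \<in> param_space B n" and par: "(al, be, r) \<in> param_space B n"
  defines "u \<equiv> \<lambda>i. al i - als i" and "v \<equiv> \<lambda>i. be i - bes i"
  shows "loglik n (al, be, r) a - loglik n (als, bes, rs) a
      + concavity_const B * (\<Sum>p\<in>pairs n. (u (fst p) + v (snd p))\<^sup>2 + (v (fst p) + u (snd p))\<^sup>2 + (r - rs)\<^sup>2)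
    \<le> (\<Sum>k=1..n. u k * out_degree_dev n (als, bes, rs) k a + v k * in_degree_dev n (als, bes, rs) k a)
      + (r - rs) * reciprocity_dev n (als, bes, rs) a"
proof -
  define \<theta>s where "\<theta>s = (als, bes, rs)"
  define d1 d2 where "d1 p = u (fst p) + v (snd p)" and "d2 p = v (fst p) + u (snd p)" for p
  define dev1 dev2 where "dev1 p = dyad_dev \<theta>s p (\<lambda>\<kappa>. of_bool (fst \<kappa>)) (dyad a p)"
    and "dev2 p = dyad_dev \<theta>s p (\<lambda>\<kappa>. of_bool (snd \<kappa>)) (dyad a p)" for p
  have per_dyad: "ln (dyad_law (al, be, r) p (dyad a p)) - ln (dyad_law \<theta>s p (dyad a p))
      \<le> d1 p * dev1 p + d2 p * dev2 p + (r - rs) * recip_dev \<theta>s p (dyad a p)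
        - concavity_const B * ((d1 p)\<^sup>2 + (d2 p)\<^sup>2 + (r - rs)\<^sup>2)"
    if "p \<in> pairs n" for p
    using ln_dyad_law_ratio_le[OF par_true par that]
    unfolding \<theta>s_def d1_def d2_def dev1_def dev2_def u_def v_def .
  have "loglik n (al, be, r) a - loglik n \<theta>s a
      = (\<Sum>p\<in>pairs n. ln (dyad_law (al, be, r) p (dyad a p)) - ln (dyad_law \<theta>s p (dyad a p)))"
    unfolding loglik_eq_sum_dyad_law by (simp add: sum_subtractf)
  also have "\<dots> \<le> (\<Sum>p\<in>pairs n. d1 p * dev1 p + d2 p * dev2 p + (r - rs) * recip_dev \<theta>s p (dyad a p)
        - concavity_const B * ((d1 p)\<^sup>2 + (d2 p)\<^sup>2 + (r - rs)\<^sup>2))"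
    by (intro sum_mono per_dyad)
  also have "\<dots> = (\<Sum>p\<in>pairs n. d1 p * dev1 p + d2 p * dev2 p + (r - rs) * recip_dev \<theta>s p (dyad a p))
      - concavity_const B * (\<Sum>p\<in>pairs n. (d1 p)\<^sup>2 + (d2 p)\<^sup>2 + (r - rs)\<^sup>2)"
    by (simp only: sum_subtractf sum_distrib_left)
  also have "(\<Sum>p\<in>pairs n. d1 p * dev1 p + d2 p * dev2 p + (r - rs) * recip_dev \<theta>s p (dyad a p))
      = (\<Sum>k=1..n. u k * out_degree_dev n \<theta>s k a + v k * in_degree_dev n \<theta>s k a)
        + (r - rs) * reciprocity_dev n \<theta>s a"
    unfolding sum_weighted_degree_devs reciprocity_dev_def d1_def d2_def dev1_def dev2_def
    by (simp add: sum.distrib sum_distrib_left)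
  finally show ?thesis unfolding \<theta>s_def d1_def d2_def by simp
qed

lemma mult_le_amgm:
  fixes w x s c :: real
  assumes s: "s > 0" and w: "\<bar>w\<bar> \<le> c"
  shows "w * x \<le> c / 2 * (x\<^sup>2 / s + s)"
proof -
  have "2 * s * \<bar>x\<bar> \<le> x\<^sup>2 + s\<^sup>2"
    using zero_le_power2[of "\<bar>x\<bar> - s"] by (simp add: power2_eq_square algebra_simps)
  then have amgm: "\<bar>x\<bar> \<le> (x\<^sup>2 / s + s) / 2" using s by (simp add: field_simps power2_eq_square)
  have "w * x \<le> \<bar>w\<bar> * \<bar>x\<bar>" by (simp add: abs_mult[symmetric])
  also have "\<dots> \<le> c * \<bar>x\<bar>" using w by (intro mult_right_mono) auto
  also have "\<dots> \<le> c * ((x\<^sup>2 / s + s) / 2)" using amgm w by (intro mult_left_mono) auto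
  finally show ?thesis by simp
qed

lemma sum_mult_le_amgm:
  fixes w x :: "'a \<Rightarrow> real"
  assumes "s > 0" and "\<And>k. k \<in> K \<Longrightarrow> \<bar>w k\<bar> \<le> c"
  shows "(\<Sum>k\<in>K. w k * x k) \<le> c / 2 * ((\<Sum>k\<in>K. (x k)\<^sup>2) / s + real (card K) * s)"
proof -
  have "(\<Sum>k\<in>K. (x k)\<^sup>2 / s + s) = (\<Sum>k\<in>K. (x k)\<^sup>2) / s + real (card K) * s"
    by (simp add: sum.distrib sum_divide_distrib)
  then have sum_eq: "(\<Sum>k\<in>K. c / 2 * ((x k)\<^sup>2 / s + s)) = c / 2 * ((\<Sum>k\<in>K. (x k)\<^sup>2) / s + real (card K) * s)"
    by (simp only: sum_distrib_left[symmetric])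
  have "(\<Sum>k\<in>K. w k * x k) \<le> (\<Sum>k\<in>K. c / 2 * ((x k)\<^sup>2 / s + s))"
    using assms by (intro sum_mono mult_le_amgm) auto
  then show ?thesis unfolding sum_eq .
qed

lemma mle_pair_sum_le:
  assumes n: "n \<ge> 1" and K: "K \<ge> 0"
    and par_true: "(als, bes, rs) \<in> param_space B n" and par: "(al, be, r) \<in> param_space B n"
    and gain: "loglik n (als, bes, rs) a \<le> loglik n (al, be, r) a"
    and score: "score_sq n (als, bes, rs) a \<le> K * (real n)\<^sup>2"
  defines "u \<equiv> \<lambda>i. al i - als i" and "v \<equiv> \<lambda>i. be i - bes i"
  shows "(\<Sum>p\<in>pairs n. (u (fst p) + v (snd p))\<^sup>2 + (v (fst p) + u (snd p))\<^sup>2 + (r - rs)\<^sup>2)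
    \<le> B * (K + 3) / concavity_const B * sqrt (real n) ^ 3"
proof -
  define \<theta>s where "\<theta>s = (als, bes, rs)"
  define s where "s = sqrt (real n)"
  have s: "s \<ge> 1" "real n = s\<^sup>2" unfolding s_def using n by auto
  define X Y where "X k = out_degree_dev n \<theta>s k a" and "Y k = in_degree_dev n \<theta>s k a" for k
  define Z where "Z = reciprocity_dev n \<theta>s a"
  have uv: "\<bar>u k\<bar> \<le> 2 * B \<and> \<bar>v k\<bar> \<le> 2 * B" if "k \<in> {1..n}" for k
    using param_space_abs_le(1)[OF par_true that] param_space_abs_le(1)[OF par that]
    unfolding u_def v_def by (auto simp: abs_le_iff)
  have "\<bar>r - rs\<bar> \<le> 2 * B"
    using param_space_abs_le(2)[OF par_true] param_space_abs_le(2)[OF par] by (auto simp: abs_le_iff)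
  then have Z_term: "(r - rs) * Z \<le> B * (Z\<^sup>2 / s + s)"
    using mult_le_amgm[of s "r - rs" "2 * B" Z] s by simp
  have X_term: "(\<Sum>k=1..n. u k * X k) \<le> B * ((\<Sum>k=1..n. (X k)\<^sup>2) / s + real n * s)"
    using sum_mult_le_amgm[of s "{1..n}" u "2 * B" X] s uv by simp
  have Y_term: "(\<Sum>k=1..n. v k * Y k) \<le> B * ((\<Sum>k=1..n. (Y k)\<^sup>2) / s + real n * s)"
    using sum_mult_le_amgm[of s "{1..n}" v "2 * B" Y] s uv by simp
  have "concavity_const B * (\<Sum>p\<in>pairs n. (u (fst p) + v (snd p))\<^sup>2 + (v (fst p) + u (snd p))\<^sup>2 + (r - rs)\<^sup>2)
      \<le> (\<Sum>k=1..n. u k * X k) + (\<Sum>k=1..n. v k * Y k) + (r - rs) * Z"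
    using loglik_gain_le_score[OF par_true par, of a] gain
    unfolding X_def Y_def Z_def \<theta>s_def u_def v_def by (simp add: sum.distrib)
  also have "\<dots> \<le> B * ((\<Sum>k=1..n. (X k)\<^sup>2) / s + real n * s)
      + B * ((\<Sum>k=1..n. (Y k)\<^sup>2) / s + real n * s) + B * (Z\<^sup>2 / s + s)"
    using X_term Y_term Z_term by (intro add_mono)
  also have "\<dots> = B * (score_sq n \<theta>s a / s + (2 * real n + 1) * s)"
    unfolding score_sq_def X_def Y_def Z_def using s by (simp add: sum.distrib field_simps)
  also have "\<dots> \<le> B * (K * s ^ 4 / s + 3 * s\<^sup>2 * s)"
  proof -
    have "B \<ge> 0" using param_space_abs_le(2)[OF par_true] by simp
    moreover have "score_sq n \<theta>s a / s \<le> K * s ^ 4 / s"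
      using score s unfolding \<theta>s_def by (intro divide_right_mono) (auto simp: power_mult_distrib[symmetric])
    ultimately show ?thesis using s by (intro mult_left_mono add_mono mult_right_mono) auto
  qed
  also have "\<dots> = B * (K + 3) * s ^ 3" using s by (simp add: field_simps power_numeral_reduce)
  finally show ?thesis using concavity_const_pos[of B] unfolding s_def by (simp add: field_simps)
qed

section \<open>From the pair sum to the three error terms\<close>

lemma pairs_Suc: "pairs (Suc n) = pairs n \<union> (\<lambda>i. (i, Suc n)) ` {1..n}"
  unfolding pairs_def by auto

lemma sum_square_eq_pairs_diag:
  fixes f :: "nat \<Rightarrow> nat \<Rightarrow> real"
  shows "(\<Sum>i=1..n. \<Sum>j=1..n. f i j)
    = (\<Sum>p\<in>pairs n. f (fst p) (snd p) + f (snd p) (fst p)) + (\<Sum>i=1..n. f i i)"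
proof (induction n)
  case 0
  have "pairs 0 = {}" by (auto simp: pairs_def)
  then show ?case by simp
next
  case (Suc n)
  have new_pairs: "(\<Sum>p\<in>pairs (Suc n). f (fst p) (snd p) + f (snd p) (fst p))
      = (\<Sum>p\<in>pairs n. f (fst p) (snd p) + f (snd p) (fst p)) + (\<Sum>i=1..n. f i (Suc n) + f (Suc n) i)"
  proof -
    have "pairs n \<inter> (\<lambda>i. (i, Suc n)) ` {1..n} = {}" unfolding pairs_def by auto
    moreover have "inj_on (\<lambda>i. (i, Suc n)) {1..n}" by (auto simp: inj_on_def)
    ultimately show ?thesis
      unfolding pairs_Suc by (simp add: sum.union_disjoint finite_pairs sum.reindex)
  qed
  have "(\<Sum>i=1..Suc n. \<Sum>j=1..Suc n. f i j) = (\<Sum>i=1..n. \<Sum>j=1..n. f i j) + (\<Sum>i=1..n. f i (Suc n))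
      + (\<Sum>j=1..n. f (Suc n) j) + f (Suc n) (Suc n)"
    by (simp add: sum.distrib)
  also have "\<dots> = (\<Sum>p\<in>pairs (Suc n). f (fst p) (snd p) + f (snd p) (fst p)) + (\<Sum>i=1..Suc n. f i i)"
    unfolding new_pairs Suc.IH by (simp add: sum.distrib)
  finally show ?case .
qed

lemma card_pairs_eq: "2 * real (card (pairs n)) + real n = (real n)\<^sup>2"
  using sum_square_eq_pairs_diag[of "\<lambda>_ _. 1" n] by (simp add: power2_eq_square)

lemma sum_square_add_sq_eq:
  fixes u v :: "nat \<Rightarrow> real"
  assumes n: "n \<ge> 1"
  defines "mu \<equiv> (1 / real n) * (\<Sum>i=1..n. u i)" and "mv \<equiv> (1 / real n) * (\<Sum>i=1..n. v i)"
  shows "(\<Sum>i=1..n. \<Sum>j=1..n. (u i + v j)\<^sup>2)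
     = real n * ((\<Sum>i=1..n. (u i - mu)\<^sup>2) + (\<Sum>i=1..n. (v i - mv)\<^sup>2)) + (real n)\<^sup>2 * (mu + mv)\<^sup>2"
proof -
  define SU SV where "SU = (\<Sum>i=1..n. u i)" and "SV = (\<Sum>i=1..n. v i)"
  define SU2 SV2 where "SU2 = (\<Sum>i=1..n. (u i)\<^sup>2)" and "SV2 = (\<Sum>i=1..n. (v i)\<^sup>2)"
  have lhs: "(\<Sum>i=1..n. \<Sum>j=1..n. (u i + v j)\<^sup>2) = real n * SU2 + real n * SV2 + 2 * SU * SV"
    unfolding SU_def SV_def SU2_def SV2_def
    by (simp add: power2_sum sum.distrib sum_distrib_left sum_distrib_right mult.assoc mult.left_commute)
      (rule sum.swap)
  have centered: "(\<Sum>i=1..n. (w i - m)\<^sup>2) = (\<Sum>i=1..n. (w i)\<^sup>2) - 2 * m * (\<Sum>i=1..n. w i) + real n * m\<^sup>2"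
    for w :: "nat \<Rightarrow> real" and m
    by (simp add: power2_diff sum.distrib sum_subtractf sum_distrib_left mult.commute mult.left_commute)
  have mu: "mu = SU / real n" and mv: "mv = SV / real n"
    unfolding mu_def mv_def SU_def SV_def by simp_all
  show ?thesis
    unfolding lhs centered SU2_def[symmetric] SV2_def[symmetric] SU_def[symmetric] SV_def[symmetric] mu mv
    using n by (simp add: field_simps power2_eq_square)
qed

lemma sqrt_powers:
  fixes s :: real
  assumes "s = sqrt (real n)"
  shows "s\<^sup>2 = real n" "s ^ 3 = real n * s" "s ^ 4 = (real n)\<^sup>2"
  using assms by (simp_all add: power_numeral_reduce power2_eq_square)

lemma pair_sum_split:
  "(\<Sum>p\<in>pairs n. (u (fst p) + v (snd p))\<^sup>2 + (v (fst p) + u (snd p))\<^sup>2 + t\<^sup>2)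
    = (\<Sum>p\<in>pairs n. (u (fst p) + v (snd p))\<^sup>2 + (u (snd p) + v (fst p))\<^sup>2) + real (card (pairs n)) * t\<^sup>2"
  by (simp add: sum.distrib add.commute)

lemma sq_le_of_pair_sum:
  assumes n: "n \<ge> 2"
    and T: "(\<Sum>p\<in>pairs n. (u (fst p) + v (snd p))\<^sup>2 + (v (fst p) + u (snd p))\<^sup>2 + t\<^sup>2) \<le> C * sqrt (real n) ^ 3"
  shows "t\<^sup>2 \<le> 4 * C / sqrt (real n)"
proof -
  define s where "s = sqrt (real n)"
  have s: "s > 0" using n unfolding s_def by simp
  note pow = sqrt_powers[OF s_def]
  have "real n \<le> (real n)\<^sup>2 / 2" using n by (simp add: power2_eq_square)
  then have "(real n)\<^sup>2 / 4 \<le> real (card (pairs n))" using card_pairs_eq[of n] by linarith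
  then have card: "s ^ 4 / 4 * t\<^sup>2 \<le> real (card (pairs n)) * t\<^sup>2"
    unfolding pow by (rule mult_right_mono) simp
  have "0 \<le> (\<Sum>p\<in>pairs n. (u (fst p) + v (snd p))\<^sup>2 + (u (snd p) + v (fst p))\<^sup>2)"
    by (intro sum_nonneg) auto
  then have "s ^ 4 / 4 * t\<^sup>2 \<le> C * s ^ 3"
    using T card unfolding pair_sum_split s_def[symmetric] by linarith
  then have "s ^ 3 * (s * t\<^sup>2) \<le> s ^ 3 * (4 * C)" by (simp add: power_numeral_reduce algebra_simps)
  then have "s * t\<^sup>2 \<le> 4 * C" using s by simp
  then show ?thesis using s unfolding s_def[symmetric] by (simp add: field_simps)
qed

lemma centered_sq_le_of_pair_sum:
  fixes u v :: "nat \<Rightarrow> real"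
  assumes n: "n \<ge> 1"
    and T: "(\<Sum>p\<in>pairs n. (u (fst p) + v (snd p))\<^sup>2 + (v (fst p) + u (snd p))\<^sup>2 + t\<^sup>2) \<le> C * sqrt (real n) ^ 3"
    and diag: "\<And>i. i \<in> {1..n} \<Longrightarrow> \<bar>u i + v i\<bar> \<le> c"
  defines "mu \<equiv> (1 / real n) * (\<Sum>i=1..n. u i)" and "mv \<equiv> (1 / real n) * (\<Sum>i=1..n. v i)"
  shows "(\<Sum>i=1..n. (u i - mu)\<^sup>2) + (\<Sum>i=1..n. (v i - mv)\<^sup>2) \<le> C * sqrt (real n) + c\<^sup>2"
    and "(mu + mv)\<^sup>2 \<le> C / sqrt (real n) + c\<^sup>2 / real n"
proof -
  define s where "s = sqrt (real n)"
  have s: "s > 0" using n unfolding s_def by simp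
  note pow = sqrt_powers[OF s_def]
  define S where "S = (\<Sum>i=1..n. (u i - mu)\<^sup>2) + (\<Sum>i=1..n. (v i - mv)\<^sup>2)"
  have "(\<Sum>i=1..n. (u i + v i)\<^sup>2) \<le> (\<Sum>i=1..n. c\<^sup>2)"
  proof (intro sum_mono)
    fix i assume "i \<in> {1..n}"
    then have "\<bar>u i + v i\<bar>\<^sup>2 \<le> c\<^sup>2" using diag by (intro power_mono) auto
    then show "(u i + v i)\<^sup>2 \<le> c\<^sup>2" by simp
  qed
  moreover have "(\<Sum>p\<in>pairs n. (u (fst p) + v (snd p))\<^sup>2 + (u (snd p) + v (fst p))\<^sup>2) \<le> C * s ^ 3"
    using T mult_nonneg_nonneg[OF of_nat_0_le_iff zero_le_power2, of "card (pairs n)" t]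
    unfolding pair_sum_split s_def by linarith
  ultimately have "(\<Sum>i=1..n. \<Sum>j=1..n. (u i + v j)\<^sup>2) \<le> C * s ^ 3 + real n * c\<^sup>2"
    using sum_square_eq_pairs_diag[of "\<lambda>i j. (u i + v j)\<^sup>2" n] by simp
  then have key: "real n * S + (real n)\<^sup>2 * (mu + mv)\<^sup>2 \<le> real n * (C * s + c\<^sup>2)"
    using sum_square_add_sq_eq[OF n, of u v] pow unfolding S_def mu_def mv_def by (simp add: algebra_simps)
  have "S \<ge> 0" unfolding S_def by (intro add_nonneg_nonneg sum_nonneg) auto
  then have "0 \<le> real n * S" "0 \<le> (real n)\<^sup>2 * (mu + mv)\<^sup>2" by simp_all
  then have "real n * S \<le> real n * (C * s + c\<^sup>2)" and "(real n)\<^sup>2 * (mu + mv)\<^sup>2 \<le> real n * (C * s + c\<^sup>2)"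
    using key by linarith+
  then have "real n * S \<le> real n * (C * s + c\<^sup>2)" and "real n * (real n * (mu + mv)\<^sup>2) \<le> real n * (C * s + c\<^sup>2)"
    by (simp_all add: power2_eq_square mult.assoc)
  then have "S \<le> C * s + c\<^sup>2" and "(mu + mv)\<^sup>2 \<le> (C * s + c\<^sup>2) / real n"
    using n by (simp_all add: pos_le_divide_eq mult.commute)
  moreover have "(C * s + c\<^sup>2) / real n = C / s + c\<^sup>2 / real n"
    using s unfolding pow(1)[symmetric] by (simp add: field_simps power2_eq_square)
  ultimately show "S \<le> C * sqrt (real n) + c\<^sup>2" and "(mu + mv)\<^sup>2 \<le> C / sqrt (real n) + c\<^sup>2 / real n"
    unfolding S_def s_def by simp_all
qed

lemma mle_error_bounds:
  assumes B: "B > 0" and n: "n \<ge> 2" and K: "K \<ge> 0"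
    and par_true: "(als, bes, rs) \<in> param_space B n" and mle: "is_mle B n a (al, be, r)"
    and score: "score_sq n (als, bes, rs) a \<le> K * (real n)\<^sup>2"
  defines "mu \<equiv> (1 / real n) * (\<Sum>i=1..n. al i - als i)"
    and "mv \<equiv> (1 / real n) * (\<Sum>i=1..n. be i - bes i)"
    and "C \<equiv> 4 * B * (K + 3) / concavity_const B + 16 * B\<^sup>2"
  shows "(r - rs)\<^sup>2 \<le> C / sqrt (real n)"
    and "(mu + mv)\<^sup>2 \<le> C / sqrt (real n)"
    and "(\<Sum>i=1..n. (al i - als i - mu)\<^sup>2) + (\<Sum>i=1..n. (be i - bes i - mv)\<^sup>2) \<le> C * sqrt (real n)"
proof -
  define C0 where "C0 = B * (K + 3) / concavity_const B"
  have C0: "C0 \<ge> 0" and C: "C = 4 * C0 + (4 * B)\<^sup>2"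
    using B K concavity_const_pos[of B] unfolding C0_def C_def by (simp_all add: power2_eq_square)
  define s where "s = sqrt (real n)"
  have s1: "1 \<le> s" using n unfolding s_def by simp
  then have "s * 1 \<le> s * s" by (intro mult_left_mono) auto
  moreover have "s * s = real n" using sqrt_powers(1)[OF s_def] by (simp add: power2_eq_square)
  ultimately have s: "1 \<le> s" "s \<le> real n" using s1 by linarith+
  have par: "(al, be, r) \<in> param_space B n" and gain: "loglik n (als, bes, rs) a \<le> loglik n (al, be, r) a"
    using mle par_true unfolding is_mle_def by auto
  have T: "(\<Sum>p\<in>pairs n. (al (fst p) - als (fst p) + (be (snd p) - bes (snd p)))\<^sup>2
        + (be (fst p) - bes (fst p) + (al (snd p) - als (snd p)))\<^sup>2 + (r - rs)\<^sup>2) \<le> C0 * sqrt (real n) ^ 3"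
    using mle_pair_sum_le[OF _ K par_true par gain score] n unfolding C0_def by simp
  have diag: "\<bar>al i - als i + (be i - bes i)\<bar> \<le> 4 * B" if "i \<in> {1..n}" for i
    using param_space_abs_le(1)[OF par_true that] param_space_abs_le(1)[OF par that] by (auto simp: abs_le_iff)
  note centered = centered_sq_le_of_pair_sum[where u = "\<lambda>i. al i - als i" and v = "\<lambda>i. be i - bes i",
      OF _ T diag, folded mu_def mv_def s_def]
  have "(r - rs)\<^sup>2 \<le> 4 * C0 / s" using sq_le_of_pair_sum[OF n T] unfolding s_def .
  also have "\<dots> \<le> C / s" using s unfolding C by (intro divide_right_mono) auto
  finally show "(r - rs)\<^sup>2 \<le> C / sqrt (real n)" unfolding s_def .
  have "(mu + mv)\<^sup>2 \<le> C0 / s + (4 * B)\<^sup>2 / real n" using centered(2) n by simp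
  also have "\<dots> \<le> C0 / s + (4 * B)\<^sup>2 / s" using s by (intro add_left_mono divide_left_mono) auto
  also have "\<dots> \<le> C / s" using C0 s unfolding C by (simp add: add_divide_distrib[symmetric] divide_right_mono)
  finally show "(mu + mv)\<^sup>2 \<le> C / sqrt (real n)" unfolding s_def .
  have "(\<Sum>i=1..n. (al i - als i - mu)\<^sup>2) + (\<Sum>i=1..n. (be i - bes i - mv)\<^sup>2) \<le> C0 * s + (4 * B)\<^sup>2"
    using centered(1) n by simp
  also have "\<dots> \<le> C * s"
  proof -
    have "C0 * s \<le> 4 * C0 * s" using C0 s by simp
    moreover have "(4 * B)\<^sup>2 * 1 \<le> (4 * B)\<^sup>2 * s" using s by (intro mult_left_mono) auto
    ultimately show ?thesis unfolding C by (simp add: distrib_right)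
  qed
  finally show "(\<Sum>i=1..n. (al i - als i - mu)\<^sup>2) + (\<Sum>i=1..n. (be i - bes i - mv)\<^sup>2) \<le> C * sqrt (real n)"
    unfolding s_def .
qed

section \<open>Stochastic boundedness\<close>

lemma prob_score_sq_gt_le:
  assumes K: "K > 0" and n: "n \<ge> 1"
  shows "prob n \<theta> (\<lambda>a. K * (real n)\<^sup>2 < score_sq n \<theta> a) \<le> 9 / K"
proof -
  have t: "K * (real n)\<^sup>2 > 0" using K n by simp
  have "prob n \<theta> (\<lambda>a. K * (real n)\<^sup>2 < score_sq n \<theta> a) \<le> expect n \<theta> (score_sq n \<theta>) / (K * (real n)\<^sup>2)"
    using t score_sq_nonneg by (rule prob_gt_le_expect)
  also have "\<dots> \<le> 9 * (real n)\<^sup>2 / (K * (real n)\<^sup>2)"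
    using expect_score_sq_le t by (intro divide_right_mono) auto
  also have "\<dots> = 9 / K" using n by simp
  finally show ?thesis .
qed

lemma bigOp_of_score_sq_bound:
  assumes "\<And>K. K > 0 \<Longrightarrow> \<exists>M. \<forall>n\<ge>3. \<forall>a\<in>configs n.
      score_sq n (\<theta> n) a \<le> K * (real n)\<^sup>2 \<longrightarrow> \<bar>X n a\<bar> \<le> M * r n"
  shows "bigOp (\<lambda>n. prob n (\<theta> n)) X r"
  unfolding bigOp_def
proof (intro allI impI)
  fix \<epsilon> :: real assume \<epsilon>: "\<epsilon> > 0"
  obtain M where M: "\<forall>n\<ge>3. \<forall>a\<in>configs n. score_sq n (\<theta> n) a \<le> (18 / \<epsilon>) * (real n)\<^sup>2 \<longrightarrow> \<bar>X n a\<bar> \<le> M * r n"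
    using assms[of "18 / \<epsilon>"] \<epsilon> by auto
  have "prob n (\<theta> n) (\<lambda>a. \<bar>X n a\<bar> > M * r n) < \<epsilon>" if n: "n \<ge> 3" for n
  proof -
    have "prob n (\<theta> n) (\<lambda>a. \<bar>X n a\<bar> > M * r n) \<le> prob n (\<theta> n) (\<lambda>a. (18 / \<epsilon>) * (real n)\<^sup>2 < score_sq n (\<theta> n) a)"
      using M n by (intro prob_mono) (meson not_le)
    also have "\<dots> \<le> 9 / (18 / \<epsilon>)" using \<epsilon> n by (intro prob_score_sq_gt_le) auto
    also have "\<dots> < \<epsilon>" using \<epsilon> by simp
    finally show ?thesis .
  qed
  then show "\<exists>M N. \<forall>n\<ge>N. prob n (\<theta> n) (\<lambda>a. \<bar>X n a\<bar> > M * r n) < \<epsilon>" by blast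
qed

lemma one_le_ln_sq: "n \<ge> 3 \<Longrightarrow> 1 \<le> (ln (real n))\<^sup>2"
proof -
  assume n: "n \<ge> 3"
  have "exp 1 \<le> real n" using exp_le n by linarith
  then have "1 \<le> ln (real n)" using ln_ge_iff[of "real n" 1] n by simp
  then show ?thesis by (simp add: one_le_power)
qed

theorem theorem1:
  fixes B :: real
    and alS beS :: "nat \<Rightarrow> nat \<Rightarrow> real"
    and rhoS :: "nat \<Rightarrow> real"
    and est :: "nat \<Rightarrow> adj \<Rightarrow> params"
  assumes "B > 0"
    and true_par: "\<And>n. (alS n, beS n, rhoS n) \<in> param_space B n"
    and mle: "\<And>n a. a \<in> configs n \<Longrightarrow> is_mle B n a (est n a)"
  defines "P \<equiv> \<lambda>n. prob n (alS n, beS n, rhoS n)"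
    and "dA \<equiv> \<lambda>n a. (1 / real n) * (\<Sum>i=1..n. fst (est n a) i - alS n i)"
    and "dB \<equiv> \<lambda>n a. (1 / real n) * (\<Sum>i=1..n. fst (snd (est n a)) i - beS n i)"
    and "r \<equiv> \<lambda>n. (ln (real n))\<^sup>2 / sqrt (real n)"
  shows "bigOp P (\<lambda>n a. (snd (snd (est n a)) - rhoS n)\<^sup>2) r
    \<and> bigOp P (\<lambda>n a. (dA n a + dB n a)\<^sup>2) r
    \<and> bigOp P (\<lambda>n a. (\<Sum>i=1..n. (fst (est n a) i - alS n i - dA n a)\<^sup>2)
                        + (\<Sum>i=1..n. (fst (snd (est n a)) i - beS n i - dB n a)\<^sup>2))
                 (\<lambda>n. sqrt (real n) * (ln (real n))\<^sup>2)"
proof -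
  define C where "C K = 4 * B * (K + 3) / concavity_const B + 16 * B\<^sup>2" for K
  have bounds: "\<bar>(snd (snd (est n a)) - rhoS n)\<^sup>2\<bar> \<le> C K * r n \<and> \<bar>(dA n a + dB n a)\<^sup>2\<bar> \<le> C K * r n
      \<and> \<bar>(\<Sum>i=1..n. (fst (est n a) i - alS n i - dA n a)\<^sup>2) + (\<Sum>i=1..n. (fst (snd (est n a)) i - beS n i - dB n a)\<^sup>2)\<bar>
          \<le> C K * (sqrt (real n) * (ln (real n))\<^sup>2)"
    if K: "K > 0" and n: "n \<ge> 3" and a: "a \<in> configs n"
      and score: "score_sq n (alS n, beS n, rhoS n) a \<le> K * (real n)\<^sup>2" for K n a
  proof -
    obtain al be rr where est: "est n a = (al, be, rr)" by (cases "est n a") auto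
    have "C K \<ge> 0" using \<open>B > 0\<close> K concavity_const_pos[of B] unfolding C_def by simp
    then have rate: "C K / sqrt (real n) \<le> C K * r n"
      and rate': "C K * sqrt (real n) \<le> C K * (sqrt (real n) * (ln (real n))\<^sup>2)"
      using one_le_ln_sq[OF n] unfolding r_def
      by (simp_all add: divide_right_mono mult_left_mono mult_le_cancel_left1)
    have "n \<ge> 2" "K \<ge> 0" using n K by simp_all
    note err = mle_error_bounds[OF \<open>B > 0\<close> this true_par mle[OF a, unfolded est] score, folded C_def]
    have "0 \<le> (\<Sum>i=1..n. (al i - alS n i - dA n a)\<^sup>2) + (\<Sum>i=1..n. (be i - beS n i - dB n a)\<^sup>2)"
      by (intro add_nonneg_nonneg sum_nonneg) auto
    then show ?thesis
      using order_trans[OF err(1) rate] order_trans[OF err(2) rate] order_trans[OF err(3) rate']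
      unfolding est dA_def dB_def by simp
  qed
  show ?thesis unfolding P_def using bounds by (intro conjI bigOp_of_score_sq_bound) blast+
qed

end
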